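(* Consider the network system of the context with each $v_i$ measurable, and suppose every subcontroller is of the form $u_i=\hat K_iR_i\begin{bmatrix} y_i\\ v_i\end{bmatrix}$ with $R_i:=\begin{bmatrix} I&-G_{y_iv_i}\end{bmatrix}$ and $\hat K_i$ a stabilizing controller for $G_{y_iu_i}$. Then, for any interaction $\boldsymbol L$ such that $\boldsymbol G_{\rm pre}$ is internally stable, the closed-loop map $\boldsymbol T_{\boldsymbol{zd}}:\boldsymbol d\mapsto\boldsymbol z$ of the entire network system satisfies $$\boldsymbol T_{\boldsymbol{zd}}=\mathrm{diag}\big(\hat M_{z_id_i}(\hat K_i)\big)+\boldsymbol G_{\boldsymbol{zv}}(I-\boldsymbol L\boldsymbol G_{\boldsymbol{wv}})^{-1}\boldsymbol L\,\mathrm{diag}\big(\hat M_{w_id_i}(\hat K_i)\big),$$ where $\hat M_{z_id_i}(\hat K_i):=G_{z_id_i}+G_{z_iu_i}\hat K_i(I-G_{y_iu_i}\hat K_i)^{-1}G_{y_id_i}$ and $\hat M_{w_id_i}(\hat K_i):=G_{w_id_i}+G_{w_iu_i}\hat K_i(I-G_{y_iu_i}\hat K_i)^{-1}G_{y_id_i}$.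
   Context: For $i=1,\dots,N$, subsystem $G_i$ is a proper real rational transfer matrix with inputs $(v_i,d_i,u_i)$ (interaction, disturbance, control) and outputs $(w_i,z_i,y_i)$ (interaction, evaluation, measurement), $G_{a_ib_i}$ denoting the block from $b_i$ to $a_i$. Stacked signals $\boldsymbol v=\mathrm{col}(v_1,\dots,v_N)$ etc.; the interaction is $\boldsymbol v=\boldsymbol L\boldsymbol w$ with $\boldsymbol L$ a proper real rational transfer matrix. $\boldsymbol G_{\boldsymbol{wv}}:=\mathrm{diag}(G_{w_iv_i})$, $\boldsymbol G_{\boldsymbol{zv}}:=\mathrm{diag}(G_{z_iv_i})$. The preexisting system $\boldsymbol G_{\rm pre}$ is the loop $\boldsymbol w=\boldsymbol G_{\boldsymbol{wv}}\boldsymbol v$, $\boldsymbol v=\boldsymbol L\boldsymbol w$. All feedback systems are well-posed; internal stability is standard. $\hat K_i$ is a stabilizing controller for $G_{y_iu_i}$ if the positive feedback loop $y_i=G_{y_iu_i}u_i$, $u_i=\hat K_iy_i$ is internally stable. *)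

theory Defs
  imports Complex_Main "HOL-Computational_Algebra.Polynomial"
    "HOL-Computational_Algebra.Fraction_Field" "Jordan_Normal_Form.Matrix"
begin

text \<open>Real rational transfer functions: the field of fractions of real polynomials
  (in the Laplace variable s).\<close>
type_synonym rf = "real poly fract"

definition proper_rat :: "rf \<Rightarrow> bool" where
  "proper_rat f \<longleftrightarrow> (\<exists>p q. q \<noteq> 0 \<and> f = Fract p q \<and> degree p \<le> degree q)"

definition stable_rat :: "rf \<Rightarrow> bool" where
  "stable_rat f \<longleftrightarrow> (\<exists>p q. q \<noteq> 0 \<and> f = Fract p q \<and> degree p \<le> degree q \<and>
      (\<forall>s::complex. 0 \<le> Re s \<longrightarrow> poly (map_poly complex_of_real q) s \<noteq> 0))"

definition proper_mat :: "rf mat \<Rightarrow> bool" where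
  "proper_mat A \<longleftrightarrow> (\<forall>i<dim_row A. \<forall>j<dim_col A. proper_rat (A $$ (i,j)))"

definition stable_mat :: "rf mat \<Rightarrow> bool" where
  "stable_mat A \<longleftrightarrow> (\<forall>i<dim_row A. \<forall>j<dim_col A. stable_rat (A $$ (i,j)))"

text \<open>Matrix inverse (meaningful for invertible square matrices).\<close>
definition minv :: "'a::field mat \<Rightarrow> 'a mat" where
  "minv A = (SOME B. inverts_mat A B \<and> inverts_mat B A)"

text \<open>Internal stability of the positive feedback loop  y = G u + r2,  u = K y + r1:
  well-posed (I - G K invertible) and all four closed-loop maps from (r1,r2) to (y,u) stable.\<close>
definition int_stable_fb :: "rf mat \<Rightarrow> rf mat \<Rightarrow> bool" where
  "int_stable_fb G K \<longleftrightarrow>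
     dim_row K = dim_col G \<and> dim_col K = dim_row G \<and>
     invertible_mat (1\<^sub>m (dim_row G) - G * K) \<and>
     (let X = minv (1\<^sub>m (dim_row G) - G * K) in
        stable_mat X \<and> stable_mat (X * G) \<and> stable_mat (K * X) \<and>
        stable_mat (1\<^sub>m (dim_col G) + K * X * G))"

definition bdiag :: "nat \<Rightarrow> (nat \<Rightarrow> 'a::zero mat) \<Rightarrow> 'a mat" where
  "bdiag N A = foldr (\<lambda>i acc. four_block_mat (A i) (0\<^sub>m (dim_row (A i)) (dim_col acc))
                                  (0\<^sub>m (dim_row acc) (dim_col (A i))) acc) [0..<N] (0\<^sub>m 0 0)"

definition Mhat :: "rf mat \<Rightarrow> rf mat \<Rightarrow> rf mat \<Rightarrow> rf mat \<Rightarrow> rf mat \<Rightarrow> rf mat" where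
  "Mhat Gad Gau Gyu Gyd K = Gad + Gau * K * minv (1\<^sub>m (dim_row Gyu) - Gyu * K) * Gyd"

text \<open>Loop equations of the whole network (stacked signals, block-diagonal plant blocks),
  with controller u = K_hat R [y; v] = K_hat (y - G_yv v) and interaction v = L w.
  The tuple is (v, w, z, y, u).\<close>
definition net_eqs ::
  "rf mat \<Rightarrow> rf mat \<Rightarrow> rf mat \<Rightarrow> rf mat \<Rightarrow> rf mat \<Rightarrow> rf mat \<Rightarrow> rf mat \<Rightarrow> rf mat \<Rightarrow> rf mat
   \<Rightarrow> rf mat \<Rightarrow> rf mat \<Rightarrow> rf vec \<Rightarrow> rf vec \<times> rf vec \<times> rf vec \<times> rf vec \<times> rf vec \<Rightarrow> bool" where
  "net_eqs Gwv Gwd Gwu Gzv Gzd Gzu Gyv Gyd Gyu K L d s \<longleftrightarrow>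
     (case s of (v, w, z, y, u) \<Rightarrow>
       v \<in> carrier_vec (dim_col Gwv) \<and> w \<in> carrier_vec (dim_row Gwv) \<and>
       z \<in> carrier_vec (dim_row Gzv) \<and> y \<in> carrier_vec (dim_row Gyv) \<and>
       u \<in> carrier_vec (dim_col Gwu) \<and>
       w = Gwv *\<^sub>v v + Gwd *\<^sub>v d + Gwu *\<^sub>v u \<and>
       z = Gzv *\<^sub>v v + Gzd *\<^sub>v d + Gzu *\<^sub>v u \<and>
       y = Gyv *\<^sub>v v + Gyd *\<^sub>v d + Gyu *\<^sub>v u \<and>
       u = K *\<^sub>v (y - Gyv *\<^sub>v v) \<and>
       v = L *\<^sub>v w)"

definition is_closed_loop_map ::
  "(rf vec \<Rightarrow> rf vec \<times> rf vec \<times> rf vec \<times> rf vec \<times> rf vec \<Rightarrow> bool) \<Rightarrow> nat \<Rightarrow> rf mat \<Rightarrow> bool" where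
  "is_closed_loop_map eqs nd T \<longleftrightarrow> dim_col T = nd \<and>
     (\<forall>d \<in> carrier_vec nd. (\<exists>!s. eqs d s) \<and>
        (\<forall>v w z y u. eqs d (v, w, z, y, u) \<longrightarrow> z = T *\<^sub>v d))"

end

theory Submission
  imports Defs "Jordan_Normal_Form.Determinant"
begin

(* Since subcontroller i feeds back e_i = y_i - G_{y_i v_i} v_i instead of y_i, the signal
   e = G_yd d + G_yu u does not depend on the interaction: the local loops e = G_yu K e + G_yd d
   close on their own, giving e = (I - G_yu K)^{-1} G_yd d and u = K e.  Then w = G_wv v + M_wd d
   and z = G_zv v + M_zd d, and the interconnection v = L w becomes v = L G_wv v + L M_wd d, which
   is solved by (I - L G_wv)^{-1}; this inverse exists by the push-through identity because
   I - G_wv L is invertible.  Block-diagonal matrices commute with sums, products and inverses of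
   blocks, so the network-level M_hat is the block diagonal of the local ones. *)

lemma minv:
  assumes "invertible_mat A" and "A \<in> carrier_mat n n"
  shows minv_carrier_mat: "minv A \<in> carrier_mat n n"
    and mult_minv: "A * minv A = 1\<^sub>m n"
    and minv_mult: "minv A * A = 1\<^sub>m n"
proof -
  have "\<exists>B. inverts_mat A B \<and> inverts_mat B A"
    using assms(1) unfolding invertible_mat_def by blast
  then have "inverts_mat A (minv A) \<and> inverts_mat (minv A) A"
    unfolding minv_def by (rule someI_ex)
  then have AB: "A * minv A = 1\<^sub>m n" and BA: "minv A * A = 1\<^sub>m (dim_row (minv A))"
    using assms(2) unfolding inverts_mat_def by auto
  have "dim_row (minv A) = n" "dim_col (minv A) = n"
    using arg_cong[OF BA, of dim_col] arg_cong[OF AB, of dim_col] assms(2) by auto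
  then show "minv A \<in> carrier_mat n n" "A * minv A = 1\<^sub>m n" "minv A * A = 1\<^sub>m n"
    using AB BA by auto
qed

lemma invertible_matI:
  assumes "A \<in> carrier_mat n n" "B \<in> carrier_mat n n" "A * B = 1\<^sub>m n" "B * A = 1\<^sub>m n"
  shows "invertible_mat A"
  using assms unfolding invertible_mat_def inverts_mat_def by auto

lemma minv_eqI:
  assumes A: "A \<in> carrier_mat n n" and B: "B \<in> carrier_mat n n"
    and AB: "A * B = 1\<^sub>m n" and BA: "B * A = 1\<^sub>m n"
  shows "minv A = B"
proof -
  have inv: "invertible_mat A"
    using assms by (rule invertible_matI)
  have "minv A = minv A * (A * B)"
    using minv_carrier_mat[OF inv A] AB by simp
  also have "\<dots> = (minv A * A) * B"
    using minv_carrier_mat[OF inv A] A B by simp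
  also have "\<dots> = B"
    using minv_mult[OF inv A] B by simp
  finally show ?thesis .
qed

(* The inverse is the push-through formula  (I - L G)\<^sup>-\<^sup>1 = I + L (I - G L)\<^sup>-\<^sup>1 G;
   over a field it suffices to check it on one side. *)
lemma invertible_one_minus_mult_swap:
  fixes G L :: "'a::field mat"
  assumes G: "G \<in> carrier_mat m n" and L: "L \<in> carrier_mat n m"
    and inv: "invertible_mat (1\<^sub>m m - G * L)"
  shows "invertible_mat (1\<^sub>m n - L * G)"
proof -
  define R where "R = 1\<^sub>m m - G * L"
  define S where "S = 1\<^sub>m n - L * G"
  define Z where "Z = minv R"
  have R: "R \<in> carrier_mat m m" and S: "S \<in> carrier_mat n n"
    unfolding R_def S_def using G L by auto
  have invR: "invertible_mat R"
    using inv unfolding R_def .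
  have Z: "Z \<in> carrier_mat m m" and RZ: "R * Z = 1\<^sub>m m"
    unfolding Z_def using minv_carrier_mat[OF invR R] mult_minv[OF invR R] by auto
  have push: "S * L = L * R"
    unfolding R_def S_def using G L
    by (simp add: minus_mult_distrib_mat[of _ n n] mult_minus_distrib_mat[of L n m _ m])
  have "S * (L * (Z * G)) = (S * L) * (Z * G)"
    using S L Z G by (simp add: assoc_mult_mat[of S n n L m "Z * G" n])
  also have "\<dots> = L * (R * (Z * G))"
    unfolding push by (rule assoc_mult_mat) (use L R Z G in auto)
  also have "\<dots> = L * G"
    using RZ G by (simp flip: assoc_mult_mat[of R m m Z m G n, OF R Z G])
  finally have SX: "S * (L * (Z * G)) = L * G" .
  define T where "T = 1\<^sub>m n + L * (Z * G)"
  have T: "T \<in> carrier_mat n n"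
    unfolding T_def using L Z G by auto
  have "S * T = S + L * G"
    unfolding T_def using S L Z G SX by (subst mult_add_distrib_mat[of S n n]) auto
  also have "\<dots> = 1\<^sub>m n"
    unfolding S_def using L G by (intro eq_matI) auto
  finally have ST: "S * T = 1\<^sub>m n" .
  show ?thesis
    using invertible_matI[OF S T ST mat_mult_left_right_inverse[OF S T ST]] unfolding S_def .
qed

lemma bdiag_0 [simp]: "bdiag 0 A = 0\<^sub>m 0 0"
  by (simp add: bdiag_def)

lemma bdiag_Suc:
  "bdiag (Suc N) A = (let B = bdiag N (\<lambda>i. A (Suc i)) in
     four_block_mat (A 0) (0\<^sub>m (dim_row (A 0)) (dim_col B)) (0\<^sub>m (dim_row B) (dim_col (A 0))) B)"
proof -
  have "[0..<Suc N] = 0 # map Suc [0..<N]"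
    by (simp add: map_Suc_upt upt_conv_Cons)
  then show ?thesis
    unfolding bdiag_def by (simp add: foldr_map o_def Let_def)
qed

lemma bdiag_cong: "(\<And>i. i < N \<Longrightarrow> A i = B i) \<Longrightarrow> bdiag N A = bdiag N B"
  unfolding bdiag_def by (rule foldr_cong) auto

lemma bdiag_carrier_mat:
  "(\<And>i. i < N \<Longrightarrow> A i \<in> carrier_mat (r i) (c i)) \<Longrightarrow>
   bdiag N A \<in> carrier_mat (\<Sum>i<N. r i) (\<Sum>i<N. c i)"
proof (induction N arbitrary: A r c)
  case (Suc N)
  have "bdiag N (\<lambda>i. A (Suc i)) \<in> carrier_mat (\<Sum>i<N. r (Suc i)) (\<Sum>i<N. c (Suc i))"
    using Suc by auto
  with Suc.prems show ?case
    unfolding bdiag_Suc Let_def sum.lessThan_Suc_shift by (intro four_block_carrier_mat) auto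
qed simp

lemma bdiag_one: "bdiag N (\<lambda>i. 1\<^sub>m (n i)) = 1\<^sub>m (\<Sum>i<N. n i)"
proof (induction N arbitrary: n)
  case 0
  then show ?case by (auto intro: eq_matI)
next
  case (Suc N)
  then show ?case
    unfolding sum.lessThan_Suc_shift by (simp add: bdiag_Suc Let_def)
qed

lemma bdiag_mult:
  "(\<And>i. i < N \<Longrightarrow> A i \<in> carrier_mat (r i) (m i)) \<Longrightarrow>
   (\<And>i. i < N \<Longrightarrow> B i \<in> carrier_mat (m i) (c i)) \<Longrightarrow>
   bdiag N A * bdiag N B = bdiag N (\<lambda>i. A i * B i)"
proof (induction N arbitrary: A B r m c)
  case (Suc N)
  let ?A = "bdiag N (\<lambda>i. A (Suc i))" and ?B = "bdiag N (\<lambda>i. B (Suc i))"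
  have IH: "?A * ?B = bdiag N (\<lambda>i. A (Suc i) * B (Suc i))"
    using Suc by (intro Suc.IH[of _ "\<lambda>i. r (Suc i)" "\<lambda>i. m (Suc i)" _ "\<lambda>i. c (Suc i)"]) auto
  have A: "?A \<in> carrier_mat (\<Sum>i<N. r (Suc i)) (\<Sum>i<N. m (Suc i))"
    and B: "?B \<in> carrier_mat (\<Sum>i<N. m (Suc i)) (\<Sum>i<N. c (Suc i))"
    and AB: "bdiag N (\<lambda>i. A (Suc i) * B (Suc i)) \<in> carrier_mat (\<Sum>i<N. r (Suc i)) (\<Sum>i<N. c (Suc i))"
    using Suc.prems by (auto intro!: bdiag_carrier_mat mult_carrier_mat)
  have A0: "A 0 \<in> carrier_mat (r 0) (m 0)" and B0: "B 0 \<in> carrier_mat (m 0) (c 0)"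
    using Suc.prems by auto
  show ?case
    unfolding bdiag_Suc Let_def
    by (subst mult_four_block_mat[OF A0 _ _ A B0 _ _ B]) (use A0 B0 A B AB IH in auto)
qed simp

lemma bdiag_add:
  "(\<And>i. i < N \<Longrightarrow> A i \<in> carrier_mat (r i) (c i)) \<Longrightarrow>
   (\<And>i. i < N \<Longrightarrow> B i \<in> carrier_mat (r i) (c i)) \<Longrightarrow>
   bdiag N A + bdiag N (B :: nat \<Rightarrow> 'a::monoid_add mat) = bdiag N (\<lambda>i. A i + B i)"
proof (induction N arbitrary: A B r c)
  case 0
  then show ?case by (auto intro: eq_matI)
next
  case (Suc N)
  let ?A = "bdiag N (\<lambda>i. A (Suc i))" and ?B = "bdiag N (\<lambda>i. B (Suc i))"
  have IH: "?A + ?B = bdiag N (\<lambda>i. A (Suc i) + B (Suc i))"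
    using Suc by (intro Suc.IH[of _ "\<lambda>i. r (Suc i)" "\<lambda>i. c (Suc i)"]) auto
  have A: "?A \<in> carrier_mat (\<Sum>i<N. r (Suc i)) (\<Sum>i<N. c (Suc i))"
    and B: "?B \<in> carrier_mat (\<Sum>i<N. r (Suc i)) (\<Sum>i<N. c (Suc i))"
    and AB: "bdiag N (\<lambda>i. A (Suc i) + B (Suc i)) \<in> carrier_mat (\<Sum>i<N. r (Suc i)) (\<Sum>i<N. c (Suc i))"
    using Suc.prems by (auto intro!: bdiag_carrier_mat add_carrier_mat)
  have A0: "A 0 \<in> carrier_mat (r 0) (c 0)" and B0: "B 0 \<in> carrier_mat (r 0) (c 0)"
    using Suc.prems by auto
  have zero: "0\<^sub>m k l + 0\<^sub>m k l = (0\<^sub>m k l :: 'a mat)" for k l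
    by (rule eq_matI) auto
  show ?case
    unfolding bdiag_Suc Let_def
    by (subst add_four_block_mat[OF A0 _ _ A B0 _ _ B]) (use A0 B0 A B AB IH zero in auto)
qed

lemma bdiag_minus:
  "(\<And>i. i < N \<Longrightarrow> A i \<in> carrier_mat (r i) (c i)) \<Longrightarrow>
   (\<And>i. i < N \<Longrightarrow> B i \<in> carrier_mat (r i) (c i)) \<Longrightarrow>
   bdiag N A - bdiag N (B :: nat \<Rightarrow> 'a::ab_group_add mat) = bdiag N (\<lambda>i. A i - B i)"
proof (induction N arbitrary: A B r c)
  case 0
  then show ?case by (auto intro: eq_matI)
next
  case (Suc N)
  let ?A = "bdiag N (\<lambda>i. A (Suc i))" and ?B = "bdiag N (\<lambda>i. B (Suc i))"
  have IH: "?A - ?B = bdiag N (\<lambda>i. A (Suc i) - B (Suc i))"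
    using Suc by (intro Suc.IH[of _ "\<lambda>i. r (Suc i)" "\<lambda>i. c (Suc i)"]) auto
  have A: "?A \<in> carrier_mat (\<Sum>i<N. r (Suc i)) (\<Sum>i<N. c (Suc i))"
    and B: "?B \<in> carrier_mat (\<Sum>i<N. r (Suc i)) (\<Sum>i<N. c (Suc i))"
    using Suc.prems by (auto intro!: bdiag_carrier_mat)
  have A0: "A 0 \<in> carrier_mat (r 0) (c 0)" and B0: "B 0 \<in> carrier_mat (r 0) (c 0)"
    using Suc.prems by auto
  show ?case
    unfolding bdiag_Suc Let_def by (rule eq_matI) (use A0 B0 A B IH[symmetric] in auto)
qed

lemma one_minus_bdiag_mult:
  fixes G K :: "nat \<Rightarrow> 'a::comm_ring_1 mat"
  assumes "\<And>i. i < N \<Longrightarrow> G i \<in> carrier_mat (r i) (c i)"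
    and "\<And>i. i < N \<Longrightarrow> K i \<in> carrier_mat (c i) (r i)"
  shows "1\<^sub>m (\<Sum>i<N. r i) - bdiag N G * bdiag N K = bdiag N (\<lambda>i. 1\<^sub>m (r i) - G i * K i)"
proof -
  have "bdiag N G * bdiag N K = bdiag N (\<lambda>i. G i * K i)"
    using assms by (rule bdiag_mult)
  then show ?thesis
    unfolding bdiag_one[symmetric] by (auto intro!: bdiag_minus[of N _ r r] mult_carrier_mat assms)
qed

lemma bdiag_inverse:
  assumes A: "\<And>i. i < N \<Longrightarrow> A i \<in> carrier_mat (n i) (n i)"
    and inv: "\<And>i. i < N \<Longrightarrow> invertible_mat (A i)"
  shows invertible_bdiag: "invertible_mat (bdiag N A)"
    and minv_bdiag: "minv (bdiag N A) = bdiag N (\<lambda>i. minv (A i))"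
proof -
  have B: "minv (A i) \<in> carrier_mat (n i) (n i)" if "i < N" for i
    by (rule minv_carrier_mat[OF inv[OF that] A[OF that]])
  have "bdiag N A * bdiag N (\<lambda>i. minv (A i)) = bdiag N (\<lambda>i. A i * minv (A i))"
    using A B by (rule bdiag_mult)
  also have "\<dots> = 1\<^sub>m (\<Sum>i<N. n i)"
    unfolding bdiag_one[symmetric] by (rule bdiag_cong) (use mult_minv[OF inv A] in auto)
  finally have AB: "bdiag N A * bdiag N (\<lambda>i. minv (A i)) = 1\<^sub>m (\<Sum>i<N. n i)" .
  have "bdiag N (\<lambda>i. minv (A i)) * bdiag N A = bdiag N (\<lambda>i. minv (A i) * A i)"
    using B A by (rule bdiag_mult)
  also have "\<dots> = 1\<^sub>m (\<Sum>i<N. n i)"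
    unfolding bdiag_one[symmetric] by (rule bdiag_cong) (use minv_mult[OF inv A] in auto)
  finally have BA: "bdiag N (\<lambda>i. minv (A i)) * bdiag N A = 1\<^sub>m (\<Sum>i<N. n i)" .
  have "bdiag N A \<in> carrier_mat (\<Sum>i<N. n i) (\<Sum>i<N. n i)"
    and "bdiag N (\<lambda>i. minv (A i)) \<in> carrier_mat (\<Sum>i<N. n i) (\<Sum>i<N. n i)"
    using A B by (auto intro: bdiag_carrier_mat)
  with AB BA show "invertible_mat (bdiag N A)" "minv (bdiag N A) = bdiag N (\<lambda>i. minv (A i))"
    by (auto intro: invertible_matI minv_eqI)
qed

lemma bdiag_loop_inverse:
  fixes G K :: "nat \<Rightarrow> 'a::field mat"
  assumes G: "\<And>i. i < N \<Longrightarrow> G i \<in> carrier_mat (r i) (c i)"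
    and K: "\<And>i. i < N \<Longrightarrow> K i \<in> carrier_mat (c i) (r i)"
    and inv: "\<And>i. i < N \<Longrightarrow> invertible_mat (1\<^sub>m (r i) - G i * K i)"
  shows invertible_one_minus_bdiag_mult:
      "invertible_mat (1\<^sub>m (\<Sum>i<N. r i) - bdiag N G * bdiag N K)"
    and minv_one_minus_bdiag_mult:
      "minv (1\<^sub>m (\<Sum>i<N. r i) - bdiag N G * bdiag N K) = bdiag N (\<lambda>i. minv (1\<^sub>m (r i) - G i * K i))"
proof -
  have P: "1\<^sub>m (r i) - G i * K i \<in> carrier_mat (r i) (r i)" if "i < N" for i
    using G[OF that] K[OF that] by auto
  have "1\<^sub>m (\<Sum>i<N. r i) - bdiag N G * bdiag N K = bdiag N (\<lambda>i. 1\<^sub>m (r i) - G i * K i)"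
    using G K by (rule one_minus_bdiag_mult)
  then show "invertible_mat (1\<^sub>m (\<Sum>i<N. r i) - bdiag N G * bdiag N K)"
    and "minv (1\<^sub>m (\<Sum>i<N. r i) - bdiag N G * bdiag N K) = bdiag N (\<lambda>i. minv (1\<^sub>m (r i) - G i * K i))"
    using invertible_bdiag[OF P inv] minv_bdiag[OF P inv] by simp_all
qed

lemma bdiag_Mhat:
  assumes A: "\<And>i. i < N \<Longrightarrow> A i \<in> carrier_mat (na i) (nd i)"
    and B: "\<And>i. i < N \<Longrightarrow> B i \<in> carrier_mat (na i) (nu i)"
    and Gyu: "\<And>i. i < N \<Longrightarrow> Gyu i \<in> carrier_mat (ny i) (nu i)"
    and Gyd: "\<And>i. i < N \<Longrightarrow> Gyd i \<in> carrier_mat (ny i) (nd i)"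
    and K: "\<And>i. i < N \<Longrightarrow> K i \<in> carrier_mat (nu i) (ny i)"
    and inv: "\<And>i. i < N \<Longrightarrow> invertible_mat (1\<^sub>m (ny i) - Gyu i * K i)"
  shows "bdiag N (\<lambda>i. Mhat (A i) (B i) (Gyu i) (Gyd i) (K i)) =
         Mhat (bdiag N A) (bdiag N B) (bdiag N Gyu) (bdiag N Gyd) (bdiag N K)"
proof -
  define X where "X i = minv (1\<^sub>m (ny i) - Gyu i * K i)" for i
  have X: "X i \<in> carrier_mat (ny i) (ny i)" if "i < N" for i
    unfolding X_def using inv[OF that] Gyu[OF that] K[OF that] by (intro minv_carrier_mat) auto
  have BK: "B i * K i \<in> carrier_mat (na i) (ny i)" if "i < N" for i
    using B[OF that] K[OF that] by auto
  have BKX: "B i * K i * X i \<in> carrier_mat (na i) (ny i)" if "i < N" for i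
    using BK[OF that] X[OF that] by auto
  have BKXG: "B i * K i * X i * Gyd i \<in> carrier_mat (na i) (nd i)" if "i < N" for i
    using BKX[OF that] Gyd[OF that] by auto
  have "dim_row (bdiag N Gyu) = (\<Sum>i<N. ny i)"
    using bdiag_carrier_mat[of N Gyu ny nu] Gyu by auto
  moreover have "minv (1\<^sub>m (\<Sum>i<N. ny i) - bdiag N Gyu * bdiag N K) = bdiag N X"
    unfolding X_def using Gyu K inv by (rule minv_one_minus_bdiag_mult)
  ultimately have minv_loop: "minv (1\<^sub>m (dim_row (bdiag N Gyu)) - bdiag N Gyu * bdiag N K) = bdiag N X"
    by simp
  have "bdiag N (\<lambda>i. Mhat (A i) (B i) (Gyu i) (Gyd i) (K i)) =
      bdiag N (\<lambda>i. A i + B i * K i * X i * Gyd i)"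
  proof (rule bdiag_cong)
    fix i assume "i < N"
    then have "dim_row (Gyu i) = ny i"
      using Gyu by blast
    then show "Mhat (A i) (B i) (Gyu i) (Gyd i) (K i) = A i + B i * K i * X i * Gyd i"
      by (simp add: Mhat_def X_def)
  qed
  also have "\<dots> = bdiag N A + bdiag N (\<lambda>i. B i * K i * X i) * bdiag N Gyd"
    using bdiag_add[OF A BKXG] bdiag_mult[OF BKX Gyd] by simp
  also have "\<dots> = bdiag N A + bdiag N B * bdiag N K * bdiag N X * bdiag N Gyd"
    using bdiag_mult[OF B K] bdiag_mult[OF BK X] by simp
  finally show ?thesis
    unfolding Mhat_def minv_loop .
qed

lemma feedback_vec_iff:
  fixes A :: "'a::field mat"
  assumes A: "A \<in> carrier_mat n n" and inv: "invertible_mat (1\<^sub>m n - A)"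
    and x: "x \<in> carrier_vec n" and b: "b \<in> carrier_vec n"
  shows "x = A *\<^sub>v x + b \<longleftrightarrow> x = minv (1\<^sub>m n - A) *\<^sub>v b"
proof -
  define S where "S = 1\<^sub>m n - A"
  have S: "S \<in> carrier_mat n n"
    unfolding S_def using A by auto
  have "S *\<^sub>v x = x - A *\<^sub>v x"
    unfolding S_def using A x by (simp add: minus_mult_distrib_mat_vec[of "1\<^sub>m n" n n A])
  then have "x = A *\<^sub>v x + b \<longleftrightarrow> S *\<^sub>v x = b"
    using A x b by (auto simp: vec_eq_iff algebra_simps)
  also have "\<dots> \<longleftrightarrow> x = minv S *\<^sub>v b"
  proof
    assume "S *\<^sub>v x = b"
    then have "minv S *\<^sub>v b = (minv S * S) *\<^sub>v x"
      using minv_carrier_mat[OF inv[folded S_def] S] S x by auto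
    then show "x = minv S *\<^sub>v b"
      using minv_mult[OF inv[folded S_def] S] x by auto
  next
    assume "x = minv S *\<^sub>v b"
    then have "S *\<^sub>v x = (S * minv S) *\<^sub>v b"
      using minv_carrier_mat[OF inv[folded S_def] S] S b by auto
    then show "S *\<^sub>v x = b"
      using mult_minv[OF inv[folded S_def] S] b by auto
  qed
  finally show ?thesis
    unfolding S_def .
qed

lemma assoc_mult4_mat_vec:
  assumes A: "A \<in> carrier_mat n\<^sub>1 n\<^sub>2" and B: "B \<in> carrier_mat n\<^sub>2 n\<^sub>3"
    and C: "C \<in> carrier_mat n\<^sub>3 n\<^sub>4" and D: "D \<in> carrier_mat n\<^sub>4 n\<^sub>5" and x: "x \<in> carrier_vec n\<^sub>5"
  shows "A * B * C * D *\<^sub>v x = A *\<^sub>v (B *\<^sub>v (C *\<^sub>v (D *\<^sub>v x)))"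
proof -
  have AB: "A * B \<in> carrier_mat n\<^sub>1 n\<^sub>3" and ABC: "A * B * C \<in> carrier_mat n\<^sub>1 n\<^sub>4"
    using A B C by auto
  have "A * B * C * D *\<^sub>v x = (A * B * C) *\<^sub>v (D *\<^sub>v x)"
    using ABC D x by (rule assoc_mult_mat_vec)
  also have "\<dots> = (A * B) *\<^sub>v (C *\<^sub>v (D *\<^sub>v x))"
    using AB C D x by (intro assoc_mult_mat_vec) auto
  also have "\<dots> = A *\<^sub>v (B *\<^sub>v (C *\<^sub>v (D *\<^sub>v x)))"
    using A B C D x by (intro assoc_mult_mat_vec) auto
  finally show ?thesis .
qed

lemma Mhat_carrier_mat:
  assumes "A \<in> carrier_mat na nd" and "B \<in> carrier_mat na nu"
    and "Gyu \<in> carrier_mat ny nu" and "Gyd \<in> carrier_mat ny nd"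
    and "K \<in> carrier_mat nu ny" and "invertible_mat (1\<^sub>m ny - Gyu * K)"
  shows "Mhat A B Gyu Gyd K \<in> carrier_mat na nd"
proof -
  have "minv (1\<^sub>m ny - Gyu * K) \<in> carrier_mat ny ny"
    using assms by (intro minv_carrier_mat) auto
  with assms show ?thesis
    unfolding Mhat_def by auto
qed

lemma Mhat_mult_vec:
  assumes A: "A \<in> carrier_mat na nd" and B: "B \<in> carrier_mat na nu"
    and Gyu: "Gyu \<in> carrier_mat ny nu" and Gyd: "Gyd \<in> carrier_mat ny nd"
    and K: "K \<in> carrier_mat nu ny" and inv: "invertible_mat (1\<^sub>m ny - Gyu * K)"
    and d: "d \<in> carrier_vec nd"
  shows "Mhat A B Gyu Gyd K *\<^sub>v d = A *\<^sub>v d + B *\<^sub>v (K *\<^sub>v (minv (1\<^sub>m ny - Gyu * K) *\<^sub>v (Gyd *\<^sub>v d)))"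
proof -
  define X where "X = minv (1\<^sub>m ny - Gyu * K)"
  have X: "X \<in> carrier_mat ny ny"
    unfolding X_def using inv Gyu K by (intro minv_carrier_mat) auto
  have BKX: "B * K * X \<in> carrier_mat na ny"
    using B K X by auto
  have "Mhat A B Gyu Gyd K *\<^sub>v d = A *\<^sub>v d + B * K * X * Gyd *\<^sub>v d"
    unfolding Mhat_def carrier_matD(1)[OF Gyu] X_def[symmetric] using A BKX Gyd d
    by (intro add_mult_distrib_mat_vec[of _ na nd]) auto
  also have "B * K * X * Gyd *\<^sub>v d = B *\<^sub>v (K *\<^sub>v (X *\<^sub>v (Gyd *\<^sub>v d)))"
    using B K X Gyd d by (rule assoc_mult4_mat_vec)
  finally show ?thesis
    unfolding X_def .
qed

context
  fixes GWV GWD GWU GZV GZD GZU GYV GYD GYU K L :: "rf mat"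
    and nV nW nZ nY nU nD :: nat
  assumes GWV: "GWV \<in> carrier_mat nW nV" and GWD: "GWD \<in> carrier_mat nW nD"
    and GWU: "GWU \<in> carrier_mat nW nU"
    and GZV: "GZV \<in> carrier_mat nZ nV" and GZD: "GZD \<in> carrier_mat nZ nD"
    and GZU: "GZU \<in> carrier_mat nZ nU"
    and GYV: "GYV \<in> carrier_mat nY nV" and GYD: "GYD \<in> carrier_mat nY nD"
    and GYU: "GYU \<in> carrier_mat nY nU"
    and K: "K \<in> carrier_mat nU nY" and L: "L \<in> carrier_mat nV nW"
    and loop_invertible: "invertible_mat (1\<^sub>m nY - GYU * K)"
    and interconnection_invertible: "invertible_mat (1\<^sub>m nV - L * GWV)"
begin

abbreviation "Mwd \<equiv> Mhat GWD GWU GYU GYD K"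
abbreviation "Mzd \<equiv> Mhat GZD GZU GYU GYD K"

lemma Mwd_carrier_mat: "Mwd \<in> carrier_mat nW nD"
  using GWD GWU GYU GYD K loop_invertible by (rule Mhat_carrier_mat)

lemma Mzd_carrier_mat: "Mzd \<in> carrier_mat nZ nD"
  using GZD GZU GYU GYD K loop_invertible by (rule Mhat_carrier_mat)

lemma loop_inverse_carrier_mat: "minv (1\<^sub>m nY - GYU * K) \<in> carrier_mat nY nY"
  using loop_invertible GYU K by (intro minv_carrier_mat) auto

lemma interconnection_inverse_carrier_mat: "minv (1\<^sub>m nV - L * GWV) \<in> carrier_mat nV nV"
  using interconnection_invertible L GWV by (intro minv_carrier_mat) auto

lemma loop_feedback_iff:
  "x \<in> carrier_vec nY \<Longrightarrow> b \<in> carrier_vec nY \<Longrightarrow>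
   x = (GYU * K) *\<^sub>v x + b \<longleftrightarrow> x = minv (1\<^sub>m nY - GYU * K) *\<^sub>v b"
  using GYU K loop_invertible by (intro feedback_vec_iff) auto

lemma interconnection_feedback_iff:
  "x \<in> carrier_vec nV \<Longrightarrow> b \<in> carrier_vec nV \<Longrightarrow>
   x = (L * GWV) *\<^sub>v x + b \<longleftrightarrow> x = minv (1\<^sub>m nV - L * GWV) *\<^sub>v b"
  using L GWV interconnection_invertible by (intro feedback_vec_iff) auto

lemma net_eqs_dims:
  "dim_col GWV = nV" "dim_row GWV = nW" "dim_row GZV = nZ" "dim_row GYV = nY" "dim_col GWU = nU"
  using GWV GZV GYV GWU by auto

lemma net_eqs_solution:
  assumes d: "d \<in> carrier_vec nD"
  defines "e \<equiv> minv (1\<^sub>m nY - GYU * K) *\<^sub>v (GYD *\<^sub>v d)"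
    and "v\<^sub>0 \<equiv> minv (1\<^sub>m nV - L * GWV) *\<^sub>v (L *\<^sub>v (Mwd *\<^sub>v d))"
  shows "net_eqs GWV GWD GWU GZV GZD GZU GYV GYD GYU K L d
           (v\<^sub>0, GWV *\<^sub>v v\<^sub>0 + Mwd *\<^sub>v d, Mzd *\<^sub>v d + GZV *\<^sub>v v\<^sub>0, GYV *\<^sub>v v\<^sub>0 + e, K *\<^sub>v e)"
proof -
  have e: "e \<in> carrier_vec nY" and u: "K *\<^sub>v e \<in> carrier_vec nU"
    unfolding e_def using loop_inverse_carrier_mat GYD K d by auto
  have v\<^sub>0: "v\<^sub>0 \<in> carrier_vec nV"
    unfolding v\<^sub>0_def using interconnection_inverse_carrier_mat L Mwd_carrier_mat d by auto
  have Mwd_d: "Mwd *\<^sub>v d = GWD *\<^sub>v d + GWU *\<^sub>v (K *\<^sub>v e)"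
    unfolding e_def using GWD GWU GYU GYD K loop_invertible d by (rule Mhat_mult_vec)
  have Mzd_d: "Mzd *\<^sub>v d = GZD *\<^sub>v d + GZU *\<^sub>v (K *\<^sub>v e)"
    unfolding e_def using GZD GZU GYU GYD K loop_invertible d by (rule Mhat_mult_vec)
  have "L *\<^sub>v (GWV *\<^sub>v v\<^sub>0 + Mwd *\<^sub>v d) = (L * GWV) *\<^sub>v v\<^sub>0 + L *\<^sub>v (Mwd *\<^sub>v d)"
    using L GWV v\<^sub>0 Mwd_carrier_mat d by (simp add: mult_add_distrib_mat_vec[of L nV nW])
  then have v\<^sub>0_eq: "v\<^sub>0 = L *\<^sub>v (GWV *\<^sub>v v\<^sub>0 + Mwd *\<^sub>v d)"
    using interconnection_feedback_iff[OF v\<^sub>0] L Mwd_carrier_mat d unfolding v\<^sub>0_def by simp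
  have "e = GYU *\<^sub>v (K *\<^sub>v e) + GYD *\<^sub>v d"
    using loop_feedback_iff[OF e] GYU K e GYD d unfolding e_def by simp
  then have "GYV *\<^sub>v v\<^sub>0 + e = GYV *\<^sub>v v\<^sub>0 + GYD *\<^sub>v d + GYU *\<^sub>v (K *\<^sub>v e)"
    using GYV GYD GYU v\<^sub>0 d u by (auto simp: vec_eq_iff)
  moreover have "GYV *\<^sub>v v\<^sub>0 + e - GYV *\<^sub>v v\<^sub>0 = e"
    using GYV v\<^sub>0 e by (auto simp: vec_eq_iff)
  moreover have "GWV *\<^sub>v v\<^sub>0 + Mwd *\<^sub>v d = GWV *\<^sub>v v\<^sub>0 + GWD *\<^sub>v d + GWU *\<^sub>v (K *\<^sub>v e)"
    unfolding Mwd_d using GWV GWD GWU v\<^sub>0 u d by (auto simp: vec_eq_iff)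
  moreover have "Mzd *\<^sub>v d + GZV *\<^sub>v v\<^sub>0 = GZV *\<^sub>v v\<^sub>0 + GZD *\<^sub>v d + GZU *\<^sub>v (K *\<^sub>v e)"
    unfolding Mzd_d using GZV GZD GZU v\<^sub>0 u d by (auto simp: vec_eq_iff)
  moreover have "GWV *\<^sub>v v\<^sub>0 + Mwd *\<^sub>v d \<in> carrier_vec nW" "Mzd *\<^sub>v d + GZV *\<^sub>v v\<^sub>0 \<in> carrier_vec nZ"
    "GYV *\<^sub>v v\<^sub>0 + e \<in> carrier_vec nY"
    using GWV GZV GYV Mwd_carrier_mat Mzd_carrier_mat v\<^sub>0 e d by auto
  ultimately show ?thesis
    unfolding net_eqs_def prod.case net_eqs_dims using v\<^sub>0 u v\<^sub>0_eq by auto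
qed

lemma net_eqs_solution_unique:
  assumes d: "d \<in> carrier_vec nD"
    and eqs: "net_eqs GWV GWD GWU GZV GZD GZU GYV GYD GYU K L d (v, w, z, y, u)"
  defines "e \<equiv> minv (1\<^sub>m nY - GYU * K) *\<^sub>v (GYD *\<^sub>v d)"
    and "v\<^sub>0 \<equiv> minv (1\<^sub>m nV - L * GWV) *\<^sub>v (L *\<^sub>v (Mwd *\<^sub>v d))"
  shows "(v, w, z, y, u) = (v\<^sub>0, GWV *\<^sub>v v\<^sub>0 + Mwd *\<^sub>v d, Mzd *\<^sub>v d + GZV *\<^sub>v v\<^sub>0, GYV *\<^sub>v v\<^sub>0 + e, K *\<^sub>v e)"
proof -
  have v: "v \<in> carrier_vec nV" and y: "y \<in> carrier_vec nY" and u: "u \<in> carrier_vec nU"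
    and w_eq: "w = GWV *\<^sub>v v + GWD *\<^sub>v d + GWU *\<^sub>v u"
    and z_eq: "z = GZV *\<^sub>v v + GZD *\<^sub>v d + GZU *\<^sub>v u"
    and y_eq: "y = GYV *\<^sub>v v + GYD *\<^sub>v d + GYU *\<^sub>v u"
    and u_eq: "u = K *\<^sub>v (y - GYV *\<^sub>v v)"
    and v_eq: "v = L *\<^sub>v w"
    using eqs unfolding net_eqs_def prod.case net_eqs_dims by blast+
  define \<epsilon> where "\<epsilon> = y - GYV *\<^sub>v v"
  have \<epsilon>: "\<epsilon> \<in> carrier_vec nY"
    unfolding \<epsilon>_def using y GYV v by auto
  have u_\<epsilon>: "u = K *\<^sub>v \<epsilon>"
    unfolding \<epsilon>_def by (rule u_eq)
  have "\<epsilon> = GYD *\<^sub>v d + GYU *\<^sub>v u"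
    unfolding \<epsilon>_def y_eq using GYV GYD GYU v d u by (auto simp: vec_eq_iff)
  also have "\<dots> = (GYU * K) *\<^sub>v \<epsilon> + GYD *\<^sub>v d"
    using GYD GYU K d u \<epsilon> by (simp add: u_\<epsilon> comm_add_vec[of _ nY])
  finally have \<epsilon>_e: "\<epsilon> = e"
    using loop_feedback_iff[OF \<epsilon>] GYD d unfolding e_def by simp
  have e: "e \<in> carrier_vec nY"
    unfolding e_def using loop_inverse_carrier_mat GYD d by auto
  have v\<^sub>0: "v\<^sub>0 \<in> carrier_vec nV"
    unfolding v\<^sub>0_def using interconnection_inverse_carrier_mat L Mwd_carrier_mat d by auto
  have w_Mwd: "w = GWV *\<^sub>v v + Mwd *\<^sub>v d"
    unfolding w_eq u_\<epsilon> \<epsilon>_e e_def using GWD GWU GYU GYD K loop_invertible d GWV v e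
    by (auto simp: Mhat_mult_vec[of _ nW nD _ nU _ nY] vec_eq_iff)
  have "L *\<^sub>v w = (L * GWV) *\<^sub>v v + L *\<^sub>v (Mwd *\<^sub>v d)"
    unfolding w_Mwd using L GWV v Mwd_carrier_mat d by (simp add: mult_add_distrib_mat_vec[of L nV nW])
  then have v_v\<^sub>0: "v = v\<^sub>0"
    using interconnection_feedback_iff[OF v] v_eq L Mwd_carrier_mat d unfolding v\<^sub>0_def by simp
  have "z = Mzd *\<^sub>v d + GZV *\<^sub>v v\<^sub>0"
    unfolding z_eq u_\<epsilon> \<epsilon>_e v_v\<^sub>0 e_def using GZD GZU GYU GYD K loop_invertible d GZV v\<^sub>0 e
    by (auto simp: Mhat_mult_vec[of _ nZ nD _ nU _ nY] vec_eq_iff)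
  moreover have "y = GYV *\<^sub>v v\<^sub>0 + e"
    using \<epsilon>_e y v GYV unfolding \<epsilon>_def v_v\<^sub>0[symmetric] by (auto simp: vec_eq_iff)
  ultimately show ?thesis
    using v_v\<^sub>0 w_Mwd u_\<epsilon> \<epsilon>_e by simp
qed

lemma is_closed_loop_map_net_eqs:
  "is_closed_loop_map (net_eqs GWV GWD GWU GZV GZD GZU GYV GYD GYU K L) nD
     (Mzd + GZV * minv (1\<^sub>m nV - L * GWV) * L * Mwd)"
proof -
  let ?Y = "minv (1\<^sub>m nV - L * GWV)"
  have T_d: "(Mzd + GZV * ?Y * L * Mwd) *\<^sub>v d = Mzd *\<^sub>v d + GZV *\<^sub>v (?Y *\<^sub>v (L *\<^sub>v (Mwd *\<^sub>v d)))"
    if d: "d \<in> carrier_vec nD" for d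
  proof -
    have "(Mzd + GZV * ?Y * L * Mwd) *\<^sub>v d = Mzd *\<^sub>v d + GZV * ?Y * L * Mwd *\<^sub>v d"
      using Mzd_carrier_mat GZV interconnection_inverse_carrier_mat L Mwd_carrier_mat d
      by (intro add_mult_distrib_mat_vec[of _ nZ nD]) auto
    also have "GZV * ?Y * L * Mwd *\<^sub>v d = GZV *\<^sub>v (?Y *\<^sub>v (L *\<^sub>v (Mwd *\<^sub>v d)))"
      using GZV interconnection_inverse_carrier_mat L Mwd_carrier_mat d by (rule assoc_mult4_mat_vec)
    finally show ?thesis .
  qed
  show ?thesis
    unfolding is_closed_loop_map_def
  proof (intro conjI ballI)
    show "dim_col (Mzd + GZV * ?Y * L * Mwd) = nD"
      using Mzd_carrier_mat Mwd_carrier_mat by simp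
  next
    fix d :: "rf vec"
    assume d: "d \<in> carrier_vec nD"
    then show "\<exists>!s. net_eqs GWV GWD GWU GZV GZD GZU GYV GYD GYU K L d s"
      using net_eqs_solution net_eqs_solution_unique by (intro ex1I) fastforce+
    show "\<forall>v w z y u. net_eqs GWV GWD GWU GZV GZD GZU GYV GYD GYU K L d (v, w, z, y, u) \<longrightarrow>
        z = (Mzd + GZV * ?Y * L * Mwd) *\<^sub>v d"
    proof (intro allI impI)
      fix v w z y u
      assume "net_eqs GWV GWD GWU GZV GZD GZU GYV GYD GYU K L d (v, w, z, y, u)"
      from net_eqs_solution_unique[OF d this]
      have "z = Mzd *\<^sub>v d + GZV *\<^sub>v (?Y *\<^sub>v (L *\<^sub>v (Mwd *\<^sub>v d)))"
        by simp
      with T_d[OF d] show "z = (Mzd + GZV * ?Y * L * Mwd) *\<^sub>v d"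
        by simp
    qed
  qed
qed

end

theorem proposition3:
  fixes N :: nat
    and nv nd nu nw nz ny :: "nat \<Rightarrow> nat"
    and Gwv Gwd Gwu Gzv Gzd Gzu Gyv Gyd Gyu Khat :: "nat \<Rightarrow> rf mat"
    and L :: "rf mat"
  assumes dims: "\<forall>i<N.
      Gwv i \<in> carrier_mat (nw i) (nv i) \<and> Gwd i \<in> carrier_mat (nw i) (nd i) \<and>
      Gwu i \<in> carrier_mat (nw i) (nu i) \<and>
      Gzv i \<in> carrier_mat (nz i) (nv i) \<and> Gzd i \<in> carrier_mat (nz i) (nd i) \<and>
      Gzu i \<in> carrier_mat (nz i) (nu i) \<and>
      Gyv i \<in> carrier_mat (ny i) (nv i) \<and> Gyd i \<in> carrier_mat (ny i) (nd i) \<and>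
      Gyu i \<in> carrier_mat (ny i) (nu i) \<and>
      Khat i \<in> carrier_mat (nu i) (ny i)"
    and proper_G: "\<forall>i<N.
      proper_mat (Gwv i) \<and> proper_mat (Gwd i) \<and> proper_mat (Gwu i) \<and>
      proper_mat (Gzv i) \<and> proper_mat (Gzd i) \<and> proper_mat (Gzu i) \<and>
      proper_mat (Gyv i) \<and> proper_mat (Gyd i) \<and> proper_mat (Gyu i)"
    and proper_K: "\<forall>i<N. proper_mat (Khat i)"
    and stab_K: "\<forall>i<N. int_stable_fb (Gyu i) (Khat i)"
    and L_dim: "L \<in> carrier_mat (\<Sum>i<N. nv i) (\<Sum>i<N. nw i)"
    and proper_L: "proper_mat L"
    and pre_stable: "int_stable_fb (bdiag N Gwv) L"
  shows "is_closed_loop_map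
           (net_eqs (bdiag N Gwv) (bdiag N Gwd) (bdiag N Gwu)
                    (bdiag N Gzv) (bdiag N Gzd) (bdiag N Gzu)
                    (bdiag N Gyv) (bdiag N Gyd) (bdiag N Gyu) (bdiag N Khat) L)
           (\<Sum>i<N. nd i)
           (bdiag N (\<lambda>i. Mhat (Gzd i) (Gzu i) (Gyu i) (Gyd i) (Khat i))
            + bdiag N Gzv * minv (1\<^sub>m (\<Sum>i<N. nv i) - L * bdiag N Gwv) * L
              * bdiag N (\<lambda>i. Mhat (Gwd i) (Gwu i) (Gyu i) (Gyd i) (Khat i)))"
proof -
  have blocks:
    "\<And>i. i < N \<Longrightarrow> Gwv i \<in> carrier_mat (nw i) (nv i)" "\<And>i. i < N \<Longrightarrow> Gwd i \<in> carrier_mat (nw i) (nd i)"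
    "\<And>i. i < N \<Longrightarrow> Gwu i \<in> carrier_mat (nw i) (nu i)" "\<And>i. i < N \<Longrightarrow> Gzv i \<in> carrier_mat (nz i) (nv i)"
    "\<And>i. i < N \<Longrightarrow> Gzd i \<in> carrier_mat (nz i) (nd i)" "\<And>i. i < N \<Longrightarrow> Gzu i \<in> carrier_mat (nz i) (nu i)"
    "\<And>i. i < N \<Longrightarrow> Gyv i \<in> carrier_mat (ny i) (nv i)" "\<And>i. i < N \<Longrightarrow> Gyd i \<in> carrier_mat (ny i) (nd i)"
    "\<And>i. i < N \<Longrightarrow> Gyu i \<in> carrier_mat (ny i) (nu i)" "\<And>i. i < N \<Longrightarrow> Khat i \<in> carrier_mat (nu i) (ny i)"
    using dims by auto
  have local_loops: "invertible_mat (1\<^sub>m (ny i) - Gyu i * Khat i)" if "i < N" for i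
    using stab_K blocks(9)[OF that] that unfolding int_stable_fb_def by auto
  have loop: "invertible_mat (1\<^sub>m (\<Sum>i<N. ny i) - bdiag N Gyu * bdiag N Khat)"
    using blocks(9,10) local_loops by (rule invertible_one_minus_bdiag_mult)
  have Gwv: "bdiag N Gwv \<in> carrier_mat (\<Sum>i<N. nw i) (\<Sum>i<N. nv i)"
    using blocks(1) by (rule bdiag_carrier_mat)
  have interconnection: "invertible_mat (1\<^sub>m (\<Sum>i<N. nv i) - L * bdiag N Gwv)"
    using pre_stable Gwv L_dim unfolding int_stable_fb_def by (auto intro: invertible_one_minus_mult_swap)
  have "bdiag N (\<lambda>i. Mhat (Gzd i) (Gzu i) (Gyu i) (Gyd i) (Khat i)) =
      Mhat (bdiag N Gzd) (bdiag N Gzu) (bdiag N Gyu) (bdiag N Gyd) (bdiag N Khat)"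
    using blocks(5,6,9,8,10) local_loops by (rule bdiag_Mhat)
  moreover have "bdiag N (\<lambda>i. Mhat (Gwd i) (Gwu i) (Gyu i) (Gyd i) (Khat i)) =
      Mhat (bdiag N Gwd) (bdiag N Gwu) (bdiag N Gyu) (bdiag N Gyd) (bdiag N Khat)"
    using blocks(2,3,9,8,10) local_loops by (rule bdiag_Mhat)
  ultimately show ?thesis
    using L_dim loop interconnection
    by (auto intro!: is_closed_loop_map_net_eqs[where nW = "\<Sum>i<N. nw i" and nZ = "\<Sum>i<N. nz i"
          and nY = "\<Sum>i<N. ny i" and nU = "\<Sum>i<N. nu i"] bdiag_carrier_mat blocks)
qed

end
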